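(* Let $G=(V,E)$ be a finite simple undirected graph with zipper constraint collection $\mathcal{Z}$, let $D\subseteq Z^2$, and let $\mathbb{S}$ be a downstream-enabled prescription on $D$. If $\mathcal{K}^+$ is a clique cover of the augmented graph $G^+(\mathbb{S})$, then there is a clique cover $\mathcal{K}$ of $G$ with $|\mathcal{K}|\le|\mathcal{K}^+|$ such that: (i) $\mathcal{K}$ is faithful to $\mathbb{S}$; and (ii) $\mathcal{K}$ satisfies every zipper constraint $(U,W,y)\in\mathcal{Z}$ with $U\in D$ and $W\in D$.
   Context: A clique cover of a graph is a collection of cliques whose union is the vertex set. A zipper constraint collection is a finite set $\mathcal{Z}=\{(U_1,W_1,y_1),\dots,(U_m,W_m,y_m)\}$, where each $U_i,W_i\in E$ is an edge of $G$ (a 2-element vertex set) and each $y_i$ is a label. A clique cover $\mathcal{K}$ satisfies the constraint $(U,W,y)$ if either no clique of $\mathcal{K}$ contains $U$, or some clique of $\mathcal{K}$ contains $W$. Let $Z^2=\{U_1,\dots,U_m,W_1,\dots,W_m\}$. Write $P\uparrow Q$ if $(P,Q,y)\in\mathcal{Z}$ for some $y$. Write $P_a\rightsquigarrow P_b$ ("$P_b$ is downstream of $P_a$") if $P_a\uparrow P_b$, or if $P_a\uparrow P_c$ for some $P_c\in Z^2$ with $P_c\rightsquigarrow P_b$; that is, $\rightsquigarrow$ is the transitive closure of $\uparrow$. A prescription on $D\subseteq Z^2$ is a subset $\mathbb{S}\subseteq D$; the elements of $D\setminus\mathbb{S}$ are off pairs. $\mathbb{S}$ is downstream enabled if, whenever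 $P_a\in\mathbb{S}$ and $P_a\rightsquigarrow P_b$, we have $P_b\in\mathbb{S}$ or $P_b\notin D$. A clique cover $\mathcal{K}$ of $G$ is faithful to $\mathbb{S}$ if every $P\in\mathbb{S}$ lies in some clique of $\mathcal{K}$ and no $P\in D\setminus\mathbb{S}$ lies in any clique of $\mathcal{K}$. Let $G'=(V,E\setminus(D\setminus\mathbb{S}))$. The augmented graph $G^+(\mathbb{S})$ has vertex set $\{[u]:u\in V\}\cup\{[u,w]:\{u,w\}\in\mathbb{S}\}$, where each $[A]$ is a new formal vertex labeled by the set $A$. Two distinct vertices $[A],[B]$ are adjacent if and only if $A\cup B$ is a clique in $G'$. *)

theory Defs
  imports Main
begin

definition simple_graph :: "'a set \<Rightarrow> 'a set set \<Rightarrow> bool" where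
  "simple_graph V E \<longleftrightarrow> finite V \<and>
     (\<forall>e\<in>E. \<exists>u v. u \<noteq> v \<and> u \<in> V \<and> v \<in> V \<and> e = {u, v})"

definition is_clique :: "'a set \<Rightarrow> 'a set set \<Rightarrow> 'a set \<Rightarrow> bool" where
  "is_clique V E C \<longleftrightarrow> C \<subseteq> V \<and> (\<forall>u\<in>C. \<forall>v\<in>C. u \<noteq> v \<longrightarrow> {u, v} \<in> E)"

definition clique_cover :: "'a set \<Rightarrow> 'a set set \<Rightarrow> 'a set set \<Rightarrow> bool" where
  "clique_cover V E K \<longleftrightarrow> (\<forall>C\<in>K. is_clique V E C) \<and> \<Union>K = V"

definition satisfies_zipper :: "'a set set \<Rightarrow> 'a set \<times> 'a set \<times> 'l \<Rightarrow> bool" where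
  "satisfies_zipper K z \<longleftrightarrow>
     (case z of (U, W, y) \<Rightarrow> (\<not> (\<exists>C\<in>K. U \<subseteq> C)) \<or> (\<exists>C\<in>K. W \<subseteq> C))"

definition Z2 :: "('a set \<times> 'a set \<times> 'l) set \<Rightarrow> 'a set set" where
  "Z2 Z = {U. \<exists>W y. (U, W, y) \<in> Z} \<union> {W. \<exists>U y. (U, W, y) \<in> Z}"

definition up_rel :: "('a set \<times> 'a set \<times> 'l) set \<Rightarrow> ('a set \<times> 'a set) set" where
  "up_rel Z = {(P, Q). \<exists>y. (P, Q, y) \<in> Z}"

definition downstream :: "('a set \<times> 'a set \<times> 'l) set \<Rightarrow> 'a set \<Rightarrow> 'a set \<Rightarrow> bool" where
  "downstream Z Pa Pb \<longleftrightarrow> (Pa, Pb) \<in> (up_rel Z)\<^sup>+"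

definition downstream_enabled ::
  "('a set \<times> 'a set \<times> 'l) set \<Rightarrow> 'a set set \<Rightarrow> 'a set set \<Rightarrow> bool" where
  "downstream_enabled Z D S \<longleftrightarrow>
     (\<forall>Pa Pb. Pa \<in> S \<and> downstream Z Pa Pb \<longrightarrow> Pb \<in> S \<or> Pb \<notin> D)"

definition faithful :: "'a set set \<Rightarrow> 'a set set \<Rightarrow> 'a set set \<Rightarrow> bool" where
  "faithful D S K \<longleftrightarrow> (\<forall>P\<in>S. \<exists>C\<in>K. P \<subseteq> C) \<and> (\<forall>P\<in>D - S. \<not> (\<exists>C\<in>K. P \<subseteq> C))"

text \<open>Augmented graph G+(S): formal vertex [A] is represented by the set A itself
  (singletons {u} for u in V, and the edges in S).  G' = (V, E - (D - S)).\<close>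
definition aug_vertices :: "'a set \<Rightarrow> 'a set set \<Rightarrow> 'a set set" where
  "aug_vertices V S = (\<lambda>u. {u}) ` V \<union> S"

definition aug_edges :: "'a set \<Rightarrow> 'a set set \<Rightarrow> 'a set set \<Rightarrow> 'a set set \<Rightarrow> 'a set set set" where
  "aug_edges V E D S = {{A, B} | A B. A \<in> aug_vertices V S \<and> B \<in> aug_vertices V S \<and> A \<noteq> B
       \<and> is_clique V (E - (D - S)) (A \<union> B)}"

end

theory Submission
  imports Defs
begin

text \<open>Replace every clique of \<open>G\<^sup>+(\<S>)\<close> by the union of the labels of its vertices. Any two
  labels in a clique span a clique of \<open>G'\<close>, so these unions are cliques of \<open>G'\<close> covering \<open>V\<close>,
  and there are at most as many of them. No off pair is an edge of \<open>G'\<close>, so none lies in such a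
  clique, while every pair of \<open>\<S>\<close> is itself a vertex of \<open>G\<^sup>+(\<S>)\<close> and so lies in one. Finally,
  a covered \<open>U \<in> D\<close> must lie in \<open>\<S>\<close>, hence so does its downstream pair \<open>W \<in> D\<close>, which is then
  covered as well.\<close>

lemma simple_graph_edgeE:
  assumes "simple_graph V E" and "e \<in> E"
  obtains u v where "u \<noteq> v" "u \<in> V" "v \<in> V" "e = {u, v}"
  using assms unfolding simple_graph_def by blast

lemma simple_graph_edges_subset_Pow: "simple_graph V E \<Longrightarrow> E \<subseteq> Pow V"
  by (auto elim: simple_graph_edgeE)

lemma Z2_subset_edges: "\<forall>(U, W, y)\<in>Z. U \<in> E \<and> W \<in> E \<Longrightarrow> Z2 Z \<subseteq> E"
  unfolding Z2_def by fastforce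

lemma is_clique_mono: "is_clique V E C \<Longrightarrow> E \<subseteq> E' \<Longrightarrow> is_clique V E' C"
  unfolding is_clique_def by blast

lemma clique_cover_mono: "clique_cover V E K \<Longrightarrow> E \<subseteq> E' \<Longrightarrow> clique_cover V E' K"
  unfolding clique_cover_def using is_clique_mono by blast

lemma clique_cover_non_edge_uncovered:
  "clique_cover V E K \<Longrightarrow> u \<noteq> v \<Longrightarrow> {u, v} \<notin> E \<Longrightarrow> \<not> (\<exists>C\<in>K. {u, v} \<subseteq> C)"
  unfolding clique_cover_def is_clique_def by blast

lemma is_clique_Union:
  assumes "\<And>A B. A \<in> \<C> \<Longrightarrow> B \<in> \<C> \<Longrightarrow> is_clique V E (A \<union> B)"
  shows "is_clique V E (\<Union>\<C>)"
  unfolding is_clique_def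
proof (intro conjI ballI impI)
  show "\<Union>\<C> \<subseteq> V" using assms unfolding is_clique_def by (metis Sup_least Un_absorb)
next
  fix u v assume "u \<in> \<Union>\<C>" "v \<in> \<Union>\<C>" "u \<noteq> v"
  then obtain A B where "A \<in> \<C>" "B \<in> \<C>" "u \<in> A \<union> B" "v \<in> A \<union> B" by blast
  with assms[of A B] \<open>u \<noteq> v\<close> show "{u, v} \<in> E" unfolding is_clique_def by blast
qed

lemma finite_aug_vertices: "simple_graph V E \<Longrightarrow> S \<subseteq> E \<Longrightarrow> finite (aug_vertices V S)"
  unfolding aug_vertices_def
  by (metis finite_Pow_iff finite_Un finite_imageI finite_subset simple_graph_def
      simple_graph_edges_subset_Pow)

lemma aug_vertex_is_clique:
  assumes "simple_graph V E" "S \<subseteq> E" "A \<in> aug_vertices V S"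
  shows "is_clique V (E - (D - S)) A"
proof (cases "A \<in> S")
  case True
  then obtain u v where "u \<in> V" "v \<in> V" "A = {u, v}"
    using assms(1,2) by (blast elim: simple_graph_edgeE)
  with True assms(2) show ?thesis unfolding is_clique_def by (auto simp: insert_commute)
next
  case False
  with assms(3) show ?thesis unfolding aug_vertices_def is_clique_def by auto
qed

lemma aug_edge_is_clique:
  assumes "{A, B} \<in> aug_edges V E D S" "A \<noteq> B"
  shows "is_clique V (E - (D - S)) (A \<union> B)"
proof -
  obtain A' B' where AB: "{A, B} = {A', B'}" and "is_clique V (E - (D - S)) (A' \<union> B')"
    using assms(1) unfolding aug_edges_def mem_Collect_eq by (elim exE conjE)
  moreover have "A \<union> B = A' \<union> B'" using AB by (auto simp: doubleton_eq_iff)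
  ultimately show ?thesis by simp
qed

lemma aug_clique_Union_is_clique:
  assumes "simple_graph V E" "S \<subseteq> E" "is_clique (aug_vertices V S) (aug_edges V E D S) \<C>"
  shows "is_clique V (E - (D - S)) (\<Union>\<C>)"
proof (rule is_clique_Union)
  fix A B assume "A \<in> \<C>" "B \<in> \<C>"
  show "is_clique V (E - (D - S)) (A \<union> B)"
  proof (cases "A = B")
    case True
    have "A \<in> aug_vertices V S" using assms(3) \<open>A \<in> \<C>\<close> unfolding is_clique_def by blast
    with True show ?thesis using aug_vertex_is_clique[OF assms(1,2)] by simp
  next
    case False
    then have "{A, B} \<in> aug_edges V E D S"
      using assms(3) \<open>A \<in> \<C>\<close> \<open>B \<in> \<C>\<close> unfolding is_clique_def by blast
    then show ?thesis using False by (rule aug_edge_is_clique)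
  qed
qed

lemma aug_clique_cover_Union:
  assumes "simple_graph V E" "S \<subseteq> E"
    and "clique_cover (aug_vertices V S) (aug_edges V E D S) Kp"
  shows "clique_cover V (E - (D - S)) (Union ` Kp)"
proof -
  have "\<Union>(aug_vertices V S) = V"
    using simple_graph_edges_subset_Pow[OF assms(1)] assms(2) unfolding aug_vertices_def by blast
  moreover have "\<Union>(Union ` Kp) = \<Union>(\<Union>Kp)" by blast
  ultimately have "\<Union>(Union ` Kp) = V" using assms(3) unfolding clique_cover_def by simp
  with assms show ?thesis
    unfolding clique_cover_def by (auto intro: aug_clique_Union_is_clique)
qed

lemma aug_clique_cover_Union_faithful:
  assumes "simple_graph V E" "D \<subseteq> E" "S \<subseteq> D"
    and "clique_cover (aug_vertices V S) (aug_edges V E D S) Kp"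
  shows "faithful D S (Union ` Kp)"
  unfolding faithful_def
proof (intro conjI ballI)
  fix P assume "P \<in> S"
  then have "P \<in> \<Union>Kp" using assms(4) unfolding clique_cover_def aug_vertices_def by blast
  then show "\<exists>C\<in>Union ` Kp. P \<subseteq> C" by blast
next
  fix P assume P: "P \<in> D - S"
  then obtain u v where uv: "u \<noteq> v" "P = {u, v}"
    using assms(1,2) by (blast elim: simple_graph_edgeE)
  have "S \<subseteq> E" using assms(2,3) by blast
  have "{u, v} \<notin> E - (D - S)" using P uv(2) by blast
  with uv show "\<not> (\<exists>C\<in>Union ` Kp. P \<subseteq> C)"
    using clique_cover_non_edge_uncovered[OF aug_clique_cover_Union[OF assms(1) \<open>S \<subseteq> E\<close> assms(4)]]
    by simp
qed

lemma faithful_satisfies_zipper: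
  assumes "faithful D S K" "downstream_enabled Z D S"
    and "(U, W, y) \<in> Z" "U \<in> D" "W \<in> D"
  shows "satisfies_zipper K (U, W, y)"
proof (cases "\<exists>C\<in>K. U \<subseteq> C")
  case True
  with assms(1,4) have "U \<in> S" unfolding faithful_def by blast
  moreover have "downstream Z U W"
    using assms(3) unfolding downstream_def up_rel_def by blast
  ultimately have "W \<in> S" using assms(2,5) unfolding downstream_enabled_def by blast
  with assms(1) show ?thesis unfolding faithful_def satisfies_zipper_def by auto
qed (simp add: satisfies_zipper_def)

theorem lemma4:
  fixes V :: "'a set" and E :: "'a set set" and Z :: "('a set \<times> 'a set \<times> 'l) set"
    and D S :: "'a set set" and Kp :: "'a set set set"
  assumes "simple_graph V E"
    and "finite Z"
    and "\<forall>(U, W, y)\<in>Z. U \<in> E \<and> W \<in> E"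
    and "D \<subseteq> Z2 Z"
    and "S \<subseteq> D"
    and "downstream_enabled Z D S"
    and "clique_cover (aug_vertices V S) (aug_edges V E D S) Kp"
  shows "\<exists>K. clique_cover V E K \<and> card K \<le> card Kp \<and> faithful D S K \<and>
           (\<forall>(U, W, y)\<in>Z. U \<in> D \<and> W \<in> D \<longrightarrow> satisfies_zipper K (U, W, y))"
proof (intro exI conjI)
  have "D \<subseteq> E" using assms(3,4) Z2_subset_edges by blast
  with assms(5) have "S \<subseteq> E" by blast
  show "clique_cover V E (Union ` Kp)"
    using aug_clique_cover_Union[OF assms(1) \<open>S \<subseteq> E\<close> assms(7)] by (rule clique_cover_mono) blast
  \<comment> \<open>finiteness comes from that of \<open>V\<close>\<close>
  have "Kp \<subseteq> Pow (aug_vertices V S)" using assms(7) unfolding clique_cover_def by blast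
  then have "finite Kp"
    using finite_aug_vertices[OF assms(1) \<open>S \<subseteq> E\<close>] by (simp add: finite_subset)
  then show "card (Union ` Kp) \<le> card Kp" by (rule card_image_le)
  show faithful: "faithful D S (Union ` Kp)"
    using aug_clique_cover_Union_faithful[OF assms(1) \<open>D \<subseteq> E\<close> assms(5,7)] .
  show "\<forall>(U, W, y)\<in>Z. U \<in> D \<and> W \<in> D \<longrightarrow> satisfies_zipper (Union ` Kp) (U, W, y)"
    by (auto intro: faithful_satisfies_zipper[OF faithful assms(6)])
qed

end
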